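(* Let $\xi\in\mathbb{R}$, let $n\ge1$ be an integer, let $\delta>0$, and let $\mathcal{P}$ be a subset of $\mathbb{Z}[T]$ each of whose elements is either a polynomial of degree $n$ or a monic polynomial of degree $n+1$. Then the following conditions are equivalent: (i) There exists a constant $c_6>0$ such that $|P^{[k]}(\xi)| \le c_6 H(P)^{1-(n-k)\delta}$ for every $P\in\mathcal{P}$ and every $k=0,1,\dots,n$. (ii) There exists a constant $c_7>0$ such that for every $P\in\mathcal{P}$ there are $n$ roots $\alpha$ of $P$ (counted with multiplicity) each satisfying $|\xi-\alpha| \le c_7 H(P)^{-\delta}$.
   Context: The height $H(P)$ of a polynomial $P\in\mathbb{R}[T]$ is the largest absolute value of its coefficients. For $P \in \mathbb{R}[T]$ and $k\ge0$, $P^{[k]}(\xi) = P^{(k)}(\xi)/k!$ denotes the $k$-th divided derivative of $P$ at $\xi$ (the coefficient of $(T-\xi)^k$ in the Taylor expansion of $P$ at $\xi$). *)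

theory Defs
  imports "HOL-Analysis.Analysis" "HOL-Computational_Algebra.Computational_Algebra"
begin

definition height :: "int poly \<Rightarrow> real" where
  "height p = real_of_int (Max ((\<lambda>i. \<bar>coeff p i\<bar>) ` {..degree p}))"

definition div_deriv :: "real poly \<Rightarrow> nat \<Rightarrow> real \<Rightarrow> real" where
  "div_deriv p k x = poly ((pderiv ^^ k) p) x / fact k"

end

theory Submission
  imports Defs
begin

text \<open>
  Let x = xi, viewed as a complex number, and let P be admissible: of degree n, or monic of
  degree n + 1.  Write H = H(P) and h = H^(-delta), so 0 < h <= 1.  The central object is the
  Taylor shift P(x + T): its k-th coefficient is the divided derivative P^[k](xi), and its roots
  are the numbers alpha - x, alpha running over the roots of P.  In these terms
    (i)  says |coeff k of P(x+T)| <= c H h^(n-k) for all k <= n, and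
    (ii) says that n of the roots of P(x+T) have absolute value <= c h.
  (ii) => (i): P(x+T) = lc(P) * q * r, where q is the product of the linear factors T + x - alpha
  over the n close roots, so the coefficients of q are O(h^(n-k)), and r is either 1 (degree n,
  with |lc(P)| <= H) or one linear factor whose constant term is O(H) by Cauchy's root bound.
  (i) => (ii): for H bounded every root lies within O(1) = O(h) of x.  For H large, inverting the
  Taylor shift shows that the n-th coefficient of P(x+T) is at least H/(2K), K = (1+|x|)^(n+1).
  In degree n this is the leading coefficient and Cauchy's bound puts all roots within O(h).
  In degree n + 1 (monic) some root alpha satisfies |x - alpha| >= H/(2^(n+3) K); dividing
  P(x+T) by T + x - alpha leaves a monic q of degree n with coefficients O(h^(n-k)), and
  Cauchy's bound for q locates the other n roots.
\<close>

abbreviation cpoly :: "int poly \<Rightarrow> complex poly" where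
  "cpoly P \<equiv> map_poly of_int P"

abbreviation taylor_shift :: "'a::comm_semiring_1 \<Rightarrow> 'a poly \<Rightarrow> 'a poly" where
  "taylor_shift x p \<equiv> pcompose p [:x, 1:]"

definition admissible :: "nat \<Rightarrow> int poly \<Rightarrow> bool" where
  "admissible n P \<longleftrightarrow> degree P = n \<or> (degree P = n + 1 \<and> lead_coeff P = 1)"

lemma higher_pderiv_taylor_shift:
  fixes p :: "'a::idom poly"
  shows "(pderiv ^^ k) (taylor_shift x p) = taylor_shift x ((pderiv ^^ k) p)"
  by (induction k) (simp_all add: pderiv_pcompose pderiv_pCons)

lemma coeff_taylor_shift:
  fixes p :: "'a::field_char_0 poly"
  shows "coeff (taylor_shift x p) k = poly ((pderiv ^^ k) p) x / fact k"
proof -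
  have "coeff ((pderiv ^^ k) (taylor_shift x p)) 0 = fact k * coeff (taylor_shift x p) k"
    by (simp add: coeff_higher_pderiv pochhammer_fact)
  also have "coeff ((pderiv ^^ k) (taylor_shift x p)) 0 = poly ((pderiv ^^ k) p) x"
    by (simp add: higher_pderiv_taylor_shift)
  finally show ?thesis by (simp add: field_simps)
qed

lemma higher_pderiv_map_of_real:
  "(pderiv ^^ k) (map_poly complex_of_real p) = map_poly of_real ((pderiv ^^ k) p)"
proof -
  have "pderiv (map_poly complex_of_real q) = map_poly of_real (pderiv q)" for q
    by (rule poly_eqI) (simp add: coeff_pderiv coeff_map_poly)
  then show ?thesis by (induction k) simp_all
qed

lemma poly_map_of_real:
  "poly (map_poly complex_of_real p) (of_real x) = of_real (poly p x)"
  by (induction p) (simp_all add: map_poly_pCons)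

lemma div_deriv_eq_taylor_coeff:
  "complex_of_real (div_deriv (map_poly real_of_int P) k \<xi>) =
     coeff (taylor_shift (complex_of_real \<xi>) (cpoly P)) k"
proof -
  have real_to_complex: "cpoly P = map_poly complex_of_real (map_poly real_of_int P)"
    by (simp add: map_poly_map_poly o_def)
  show ?thesis
    unfolding div_deriv_def coeff_taylor_shift real_to_complex higher_pderiv_map_of_real
      poly_map_of_real
    by simp
qed

lemma taylor_shift_inverse:
  fixes p :: "'a::comm_ring_1 poly"
  shows "taylor_shift (- x) (taylor_shift x p) = p"
  by (simp add: pcompose_assoc[symmetric] pcompose_pCons)

lemma taylor_shift_factorization:
  fixes p :: "complex poly"
  shows "taylor_shift x p = smult (lead_coeff p) (\<Prod>\<alpha>\<in>#proots p. [:x - \<alpha>, 1:])"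
proof -
  have shift_prod: "taylor_shift x (\<Prod>\<alpha>\<in>#M. [:- \<alpha>, 1:]) = (\<Prod>\<alpha>\<in>#M. [:x - \<alpha>, 1:])"
    for M :: "complex multiset"
    by (induction M) (simp_all add: pcompose_1 pcompose_mult pcompose_pCons del: mult_pCons_left)
  have "taylor_shift x p = taylor_shift x (smult (lead_coeff p) (\<Prod>\<alpha>\<in>#proots p. [:- \<alpha>, 1:]))"
    by (simp only: complex_poly_decompose_multiset)
  then show ?thesis
    by (simp only: pcompose_smult shift_prod)
qed

lemma coeff_linear_factor_mult:
  fixes u :: "'a::comm_ring_1"
  shows "coeff ([:u, 1:] * p) k = u * coeff p k + (if k = 0 then 0 else coeff p (k - 1))"
  by (cases k) simp_all

lemma coeff_linear_factor_mult_bound: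
  fixes u :: complex and q :: "complex poly"
  assumes "norm (coeff q k) \<le> B" "0 < k \<Longrightarrow> norm (coeff q (k - 1)) \<le> B" "0 \<le> B"
  shows "norm (coeff ([:u, 1:] * q) k) \<le> (norm u + 1) * B"
proof -
  have "norm (coeff ([:u, 1:] * q) k)
          \<le> norm u * norm (coeff q k) + (if k = 0 then 0 else norm (coeff q (k - 1)))"
    unfolding coeff_linear_factor_mult by (auto simp: norm_mult intro: order_trans[OF norm_triangle_ineq])
  also have "\<dots> \<le> norm u * B + B"
    using assms by (intro add_mono mult_left_mono) auto
  finally show ?thesis by (simp add: algebra_simps)
qed

lemma prod_linear_factors_coeff_bound:
  fixes M :: "complex multiset" and x :: complex
  assumes "\<forall>\<alpha>\<in>#M. norm (x - \<alpha>) \<le> r" "0 \<le> r"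
  shows "norm (coeff (\<Prod>\<alpha>\<in>#M. [:x - \<alpha>, 1:]) k)
           \<le> (if k \<le> size M then 2 ^ size M * r ^ (size M - k) else 0)"
  using assms(1)
proof (induction M arbitrary: k)
  case empty
  then show ?case by (cases k) simp_all
next
  case (add a M)
  define p where "p = (\<Prod>\<alpha>\<in>#M. [:x - \<alpha>, 1:])"
  define m where "m = size M"
  have "\<forall>\<alpha>\<in>#M. norm (x - \<alpha>) \<le> r" using add.prems by simp
  from add.IH[OF this]
  have IH: "norm (coeff p j) \<le> (if j \<le> m then 2 ^ m * r ^ (m - j) else 0)" for j
    unfolding p_def m_def .
  have a_close: "norm (x - a) \<le> r" using add.prems by simp
  have coeff_eq: "coeff (\<Prod>\<alpha>\<in>#add_mset a M. [:x - \<alpha>, 1:]) k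
                    = (x - a) * coeff p k + (if k = 0 then 0 else coeff p (k - 1))"
    by (simp add: p_def coeff_linear_factor_mult del: mult_pCons_left)
  have first: "norm ((x - a) * coeff p k) \<le> (if k \<le> m then 2 ^ m * r ^ (m + 1 - k) else 0)"
  proof -
    have "norm ((x - a) * coeff p k) \<le> r * norm (coeff p k)"
      by (simp add: norm_mult mult_right_mono a_close)
    also have "\<dots> \<le> r * (if k \<le> m then 2 ^ m * r ^ (m - k) else 0)"
      using IH assms(2) by (simp add: mult_left_mono)
    also have "\<dots> = (if k \<le> m then 2 ^ m * r ^ (m + 1 - k) else 0)"
      by (auto simp: Suc_diff_le)
    finally show ?thesis .
  qed
  have second: "(if k = 0 then 0 else norm (coeff p (k - 1)))
                  \<le> (if k \<le> m + 1 then 2 ^ m * r ^ (m + 1 - k) else 0)"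
    using IH[of "k - 1"] assms(2) by (cases k) auto
  have "norm (coeff (\<Prod>\<alpha>\<in>#add_mset a M. [:x - \<alpha>, 1:]) k)
          \<le> norm ((x - a) * coeff p k) + (if k = 0 then 0 else norm (coeff p (k - 1)))"
    unfolding coeff_eq by (auto intro: norm_triangle_ineq)
  also have "\<dots> \<le> (if k \<le> m then 2 ^ m * r ^ (m + 1 - k) else 0)
                 + (if k \<le> m + 1 then 2 ^ m * r ^ (m + 1 - k) else 0)"
    using first second by (rule add_mono)
  also have "\<dots> \<le> (if k \<le> Suc m then 2 ^ Suc m * r ^ (Suc m - k) else 0)"
    using assms(2) by auto
  finally show ?case by (simp only: m_def size_add_mset)
qed

section \<open>Cauchy's root bound\<close>

lemma lower_terms_bound:
  fixes c :: "nat \<Rightarrow> complex" and z :: complex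
  assumes "0 < t" "t \<le> norm z" "0 \<le> B" "\<forall>i<d. norm (c i) \<le> B * t ^ (d - i)"
  shows "norm (\<Sum>i<d. c i * z ^ i) \<le> real d * B * t * norm z ^ (d - 1)"
proof -
  have "norm (c i * z ^ i) \<le> B * t * norm z ^ (d - 1)" if "i < d" for i
  proof -
    have "norm (c i * z ^ i) \<le> B * t ^ (d - i) * norm z ^ i"
      using assms(4) that by (simp add: norm_mult norm_power mult_right_mono)
    also have "t ^ (d - i) = t * t ^ (d - 1 - i)"
      using that by (metis Suc_diff_Suc lessThan_iff diff_Suc_1 power_Suc diff_commute)
    also have "B * (t * t ^ (d - 1 - i)) * norm z ^ i \<le> B * (t * norm z ^ (d - 1 - i)) * norm z ^ i"
      using assms by (intro mult_right_mono mult_left_mono power_mono) auto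
    also have "\<dots> = B * t * norm z ^ (d - 1)"
      using that by (simp add: mult.assoc power_add[symmetric])
    finally show ?thesis .
  qed
  then have "norm (\<Sum>i<d. c i * z ^ i) \<le> (\<Sum>i<d. B * t * norm z ^ (d - 1))"
    by (intro order_trans[OF norm_sum] sum_mono) auto
  then show ?thesis by simp
qed

lemma cauchy_root_bound:
  fixes q :: "complex poly"
  assumes "poly q z = 0" "0 < t" "0 < L" "L \<le> norm (lead_coeff q)" "0 \<le> B"
    and "\<forall>k<degree q. norm (coeff q k) \<le> B * t ^ (degree q - k)"
  shows "norm z \<le> max t (real (degree q) * B * t / L)"
proof (rule ccontr)
  assume "\<not> ?thesis"
  then have z_large: "t < norm z" and z_beyond: "real (degree q) * B * t / L < norm z" by auto
  define d where "d = degree q"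
  have "d \<noteq> 0"
  proof
    assume "d = 0"
    then have "poly q z = lead_coeff q" by (simp add: d_def poly_altdef)
    then show False using assms by auto
  qed
  have "poly q z = (\<Sum>i<d. coeff q i * z ^ i) + lead_coeff q * z ^ d"
    by (simp add: poly_altdef d_def lessThan_Suc_atMost[symmetric])
  then have leading: "lead_coeff q * z ^ d = - (\<Sum>i<d. coeff q i * z ^ i)"
    using assms(1) by (simp add: eq_neg_iff_add_eq_0 add.commute)
  have "L * norm z ^ d \<le> norm (lead_coeff q * z ^ d)"
    using assms(4) by (simp add: norm_mult norm_power mult_right_mono)
  also have "\<dots> \<le> real d * B * t * norm z ^ (d - 1)"
    unfolding leading norm_minus_cancel
    using assms z_large by (intro lower_terms_bound) (auto simp: d_def)
  also have "norm z ^ d = norm z * norm z ^ (d - 1)"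
    using \<open>d \<noteq> 0\<close> by (metis power_Suc Suc_pred' not_gr0 diff_Suc_1)
  finally have "L * norm z * norm z ^ (d - 1) \<le> real d * B * t * norm z ^ (d - 1)"
    by (simp add: mult.assoc)
  moreover have "0 < norm z ^ (d - 1)" using z_large assms(2) by (intro zero_less_power) linarith
  ultimately have "L * norm z \<le> real d * B * t" by simp
  then show False using z_beyond assms(3) by (simp add: d_def field_simps)
qed

lemma coeff_le_height: "\<bar>real_of_int (coeff P i)\<bar> \<le> height P"
proof -
  have "\<bar>coeff P i\<bar> \<le> Max ((\<lambda>i. \<bar>coeff P i\<bar>) ` {..degree P})"
  proof (cases "i \<le> degree P")
    case True
    then show ?thesis by (intro Max_ge) auto
  next
    case False
    then have "\<bar>coeff P i\<bar> \<le> \<bar>coeff P 0\<bar>" by (simp add: coeff_eq_0)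
    also have "\<dots> \<le> Max ((\<lambda>i. \<bar>coeff P i\<bar>) ` {..degree P})" by (intro Max_ge) auto
    finally show ?thesis .
  qed
  then show ?thesis unfolding height_def by linarith
qed

lemma height_attained: "\<exists>i. height P = \<bar>real_of_int (coeff P i)\<bar>"
proof -
  have "Max ((\<lambda>i. \<bar>coeff P i\<bar>) ` {..degree P}) \<in> (\<lambda>i. \<bar>coeff P i\<bar>) ` {..degree P}"
    by (intro Max_in) auto
  then show ?thesis unfolding height_def by force
qed

lemma height_ge_1:
  assumes "P \<noteq> 0" shows "1 \<le> height P"
proof -
  have "lead_coeff P \<noteq> 0" using assms by simp
  then have "1 \<le> \<bar>real_of_int (lead_coeff P)\<bar>" by linarith
  then show ?thesis using coeff_le_height[of P "degree P"] by linarith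
qed

lemma integer_root_bound:
  assumes "1 \<le> degree P" "poly (cpoly P) \<alpha> = 0"
  shows "norm \<alpha> \<le> real (degree P) * height P"
proof -
  have nonzero: "P \<noteq> 0" using assms(1) by auto
  then have H1: "1 \<le> height P" by (rule height_ge_1)
  have "norm \<alpha> \<le> max 1 (real (degree (cpoly P)) * height P * 1 / 1)"
  proof (rule cauchy_root_bound[OF assms(2)])
    have "lead_coeff P \<noteq> 0" using nonzero by simp
    then have "1 \<le> \<bar>real_of_int (lead_coeff P)\<bar>" by linarith
    then show "1 \<le> norm (lead_coeff (cpoly P))" by (simp add: degree_map_poly coeff_map_poly)
    show "\<forall>k<degree (cpoly P). norm (coeff (cpoly P) k) \<le> height P * 1 ^ (degree (cpoly P) - k)"
      using coeff_le_height[of P] by (simp add: coeff_map_poly)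
  qed (use H1 in auto)
  moreover have "1 * 1 \<le> real (degree P) * height P"
    using assms(1) H1 by (intro mult_mono) auto
  ultimately show ?thesis by (simp add: degree_map_poly)
qed

section \<open>Recovering the height from the Taylor coefficients\<close>

text \<open>By the binomial theorem, the coefficients of (T + y)^i are at most (1 + |y|)^i.\<close>
lemma coeff_linear_power_bound:
  fixes y :: complex
  shows "norm (coeff ([:y, 1:] ^ i) j) \<le> (1 + norm y) ^ i"
proof (cases "j \<le> i")
  case True
  have "norm (coeff ([:y, 1:] ^ i) j) = real (i choose j) * 1 ^ j * norm y ^ (i - j)"
    using True by (simp add: coeff_linear_poly_power norm_mult norm_power)
  also have "\<dots> \<le> (\<Sum>k\<le>i. real (i choose k) * 1 ^ k * norm y ^ (i - k))"
    using True by (intro member_le_sum) auto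
  also have "\<dots> = (1 + norm y) ^ i" by (simp only: binomial_ring)
  finally show ?thesis .
next
  case False
  then have "coeff ([:y, 1:] ^ i) j = 0"
    by (intro coeff_eq_0) (simp add: degree_linear_power)
  then show ?thesis by simp
qed

lemma coeff_taylor_shift_bound:
  fixes q :: "complex poly"
  shows "norm (coeff (taylor_shift y q) j) \<le> (\<Sum>i\<le>degree q. norm (coeff q i)) * (1 + norm y) ^ degree q"
proof -
  have "taylor_shift y q = (\<Sum>i\<le>degree q. smult (coeff q i) ([:y, 1:] ^ i))"
    unfolding pcompose_altdef poly_altdef by (simp add: degree_map_poly coeff_map_poly)
  then have "norm (coeff (taylor_shift y q) j)
               = norm (\<Sum>i\<le>degree q. coeff q i * coeff ([:y, 1:] ^ i) j)"
    by (simp add: coeff_sum)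
  also have "\<dots> \<le> (\<Sum>i\<le>degree q. norm (coeff q i) * (1 + norm y) ^ degree q)"
  proof (intro order_trans[OF norm_sum] sum_mono)
    fix i assume "i \<in> {..degree q}"
    then have "norm (coeff ([:y, 1:] ^ i) j) \<le> (1 + norm y) ^ degree q"
      by (intro order_trans[OF coeff_linear_power_bound] power_increasing) auto
    then show "norm (coeff q i * coeff ([:y, 1:] ^ i) j) \<le> norm (coeff q i) * (1 + norm y) ^ degree q"
      by (simp add: norm_mult mult_left_mono)
  qed
  also have "\<dots> = (\<Sum>i\<le>degree q. norm (coeff q i)) * (1 + norm y) ^ degree q"
    by (simp add: sum_distrib_right)
  finally show ?thesis .
qed

text \<open>Inverting the Taylor shift: the height of P is controlled by the coefficients of P(x+T).\<close>
lemma height_le_taylor_coeffs: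
  "height P \<le> (\<Sum>i\<le>degree P. norm (coeff (taylor_shift x (cpoly P)) i)) * (1 + norm x) ^ degree P"
proof -
  obtain i where "height P = \<bar>real_of_int (coeff P i)\<bar>" using height_attained by blast
  also have "\<dots> = norm (coeff (taylor_shift (- x) (taylor_shift x (cpoly P))) i)"
    by (simp add: taylor_shift_inverse coeff_map_poly)
  also have "\<dots> \<le> (\<Sum>i\<le>degree P. norm (coeff (taylor_shift x (cpoly P)) i)) * (1 + norm x) ^ degree P"
    using coeff_taylor_shift_bound[of "taylor_shift x (cpoly P)" "- x" i]
    by (simp add: degree_pcompose degree_map_poly)
  finally show ?thesis .
qed

section \<open>Close roots give small divided derivatives\<close>

lemma scaled_power_le:
  fixes c h :: real
  assumes "0 < h" "h \<le> 1" "0 < c" "m \<le> N" "l \<le> m"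
  shows "(c * h) ^ m \<le> (max 1 c) ^ N * h ^ l"
proof -
  have "(c * h) ^ m = c ^ m * h ^ m" by (simp add: power_mult_distrib)
  also have "c ^ m \<le> (max 1 c) ^ m" using assms by (intro power_mono) auto
  also have "(max 1 c) ^ m \<le> (max 1 c) ^ N" using assms by (intro power_increasing) auto
  also have "h ^ m \<le> h ^ l" using assms by (intro power_decreasing) auto
  finally show ?thesis using assms by (simp add: mult_mono)
qed

text \<open>The product q of the linear factors T + x - alpha over n roots alpha within c h of x
  (0 < h <= 1) has coefficients of order h^(n - j), even one index lower (needed when q is
  multiplied by a further linear factor).\<close>
lemma close_factor_coeff_bound:
  fixes A :: "complex multiset"
  assumes "size A = n" "\<forall>\<alpha>\<in>#A. norm (x - \<alpha>) \<le> c * h" "0 < h" "h \<le> 1" "0 < c"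
    and "i \<le> j" "j \<le> Suc i" "j \<le> n"
  shows "norm (coeff (\<Prod>\<alpha>\<in>#A. [:x - \<alpha>, 1:]) i) \<le> 2 ^ n * (max 1 c) ^ (n + 1) * h ^ (n - j)"
proof -
  have "norm (coeff (\<Prod>\<alpha>\<in>#A. [:x - \<alpha>, 1:]) i) \<le> 2 ^ n * (c * h) ^ (n - i)"
    using prod_linear_factors_coeff_bound[of A x "c * h" i] assms by auto
  also have "(c * h) ^ (n - i) \<le> (max 1 c) ^ (n + 1) * h ^ (n - j)"
    using assms by (intro scaled_power_le) auto
  finally show ?thesis by (simp add: mult.assoc mult_left_mono)
qed

text \<open>Direction (ii) => (i) for a single admissible polynomial, with h an abstract parameter.\<close>
lemma close_roots_imp_taylor_bound:
  fixes P :: "int poly" and A :: "complex multiset"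
  assumes adm: "admissible n P" and "1 \<le> n" and h: "0 < h" "h \<le> 1" and "0 < c"
    and A: "size A = n" "A \<subseteq># proots (cpoly P)" "\<forall>\<alpha>\<in>#A. norm (x - \<alpha>) \<le> c * h"
    and "k \<le> n"
  shows "norm (coeff (taylor_shift x (cpoly P)) k)
           \<le> (norm x + real n + 2) * (2 ^ n * (max 1 c) ^ (n + 1)) * (height P * h ^ (n - k))"
proof -
  define G where "G = 2 ^ n * (max 1 c) ^ (n + 1)"
  define H where "H = height P"
  define q where "q = (\<Prod>\<alpha>\<in>#A. [:x - \<alpha>, 1:])"
  have G0: "0 < G" by (simp add: G_def)
  have H1: "1 \<le> H" unfolding H_def using adm \<open>1 \<le> n\<close> by (intro height_ge_1) (auto simp: admissible_def)
  have q_bound: "norm (coeff q i) \<le> G * h ^ (n - j)" if "i \<le> j" "j \<le> Suc i" "j \<le> n" for i j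
    unfolding q_def G_def using close_factor_coeff_bound[OF A(1,3) h \<open>0 < c\<close> that] .
  obtain B where roots: "proots (cpoly P) = A + B"
    using A(2) by (auto simp: mset_subset_eq_exists_conv)
  have size_roots: "size (proots (cpoly P)) = degree P"
    by (simp add: size_proots_complex degree_map_poly)
  have shift_factored: "taylor_shift x (cpoly P)
                          = smult (lead_coeff (cpoly P)) (q * (\<Prod>\<alpha>\<in>#B. [:x - \<alpha>, 1:]))"
    unfolding taylor_shift_factorization roots q_def by simp
  have "norm (coeff (taylor_shift x (cpoly P)) k) \<le> (norm x + real n + 2) * G * (H * h ^ (n - k))"
  proof (cases "degree P = n")
    case True
    then have "B = {#}" using size_roots A(1) roots by simp
    then have "norm (coeff (taylor_shift x (cpoly P)) k) = \<bar>real_of_int (lead_coeff P)\<bar> * norm (coeff q k)"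
      using shift_factored by (simp add: norm_mult degree_map_poly coeff_map_poly)
    also have "\<dots> \<le> H * (G * h ^ (n - k))"
      using coeff_le_height[of P] q_bound[of k k] \<open>k \<le> n\<close> H1 unfolding H_def
      by (intro mult_mono) auto
    also have "\<dots> \<le> (norm x + real n + 2) * G * (H * h ^ (n - k))"
      using H1 h G0 by (simp add: field_simps mult_right_mono)
    finally show ?thesis .
  next
    case False
    then have deg: "degree P = n + 1" and monic: "lead_coeff P = 1"
      using adm by (auto simp: admissible_def)
    then have "size B = 1" using size_roots A(1) roots by simp
    then obtain \<beta> where B: "B = {#\<beta>#}" using size_1_singleton_mset by blast
    have "\<beta> \<in># proots (cpoly P)" using roots B by simp
    then have "poly (cpoly P) \<beta> = 0" by (cases "cpoly P = 0") auto
    then have "norm \<beta> \<le> (real n + 1) * H"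
      using integer_root_bound[of P \<beta>] deg unfolding H_def by (simp add: add.commute)
    then have "norm (x - \<beta>) \<le> norm x + (real n + 1) * H"
      using norm_triangle_ineq4[of x \<beta>] by linarith
    then have far_factor: "norm (x - \<beta>) + 1 \<le> (norm x + real n + 2) * H"
      using H1 mult_left_mono[OF H1, of "norm x"] by (simp add: algebra_simps)
    have shift_q: "taylor_shift x (cpoly P) = [:x - \<beta>, 1:] * q"
      using shift_factored monic B by (simp add: degree_map_poly coeff_map_poly deg mult.commute)
    have "norm (coeff (taylor_shift x (cpoly P)) k) \<le> (norm (x - \<beta>) + 1) * (G * h ^ (n - k))"
      unfolding shift_q using q_bound[of k k] q_bound[of "k - 1" k] \<open>k \<le> n\<close> G0 h
      by (intro coeff_linear_factor_mult_bound) auto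
    also have "\<dots> \<le> ((norm x + real n + 2) * H) * (G * h ^ (n - k))"
      using far_factor G0 h by (intro mult_right_mono) auto
    finally show ?thesis by (simp add: mult_ac)
  qed
  then show ?thesis by (simp add: G_def H_def mult.assoc)
qed

section \<open>Small divided derivatives give close roots\<close>

lemma taylor_top_coeff_admissible:
  fixes P :: "int poly" and x :: complex
  assumes adm: "admissible n P"
  shows "norm (coeff (taylor_shift x (cpoly P)) (n + 1)) \<le> 1"
proof (cases "degree P = n")
  case True
  then show ?thesis by (simp add: coeff_eq_0 degree_pcompose degree_map_poly)
next
  case False
  then have "degree P = n + 1" "lead_coeff P = 1" using adm by (auto simp: admissible_def)
  then have "degree (taylor_shift x (cpoly P)) = n + 1"
    by (simp add: degree_pcompose degree_map_poly)
  then have "coeff (taylor_shift x (cpoly P)) (n + 1) = lead_coeff (taylor_shift x (cpoly P))"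
    by simp
  also have "\<dots> = lead_coeff (cpoly P)" by (simp add: lead_coeff_comp)
  also have "\<dots> = 1" using \<open>lead_coeff P = 1\<close> by (simp add: degree_map_poly coeff_map_poly)
  finally show ?thesis by simp
qed

lemma taylor_middle_coeff_large:
  fixes P :: "int poly" and x :: complex and n :: nat
  defines "K \<equiv> (1 + norm x) ^ (n + 1)"
  assumes adm: "admissible n P" and h: "0 < h" "h \<le> 1" and "0 \<le> c"
    and bound: "\<forall>k\<le>n. norm (coeff (taylor_shift x (cpoly P)) k) \<le> c * (height P * h ^ (n - k))"
    and large: "4 * K \<le> height P" and small: "4 * K * real n * c * h \<le> 1"
  shows "height P \<le> 2 * K * norm (coeff (taylor_shift x (cpoly P)) n)"
proof -
  define TC where "TC = taylor_shift x (cpoly P)"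
  define H where "H = height P"
  define b where "b = norm (coeff TC n)"
  have K1: "1 \<le> K" unfolding K_def by (intro one_le_power) simp
  have H1: "1 \<le> H" using large K1 unfolding H_def by linarith
  have deg: "degree P \<le> n + 1" using adm by (auto simp: admissible_def)
  have lower: "(\<Sum>i<n. norm (coeff TC i)) \<le> real n * (c * H * h)"
  proof -
    have "norm (coeff TC i) \<le> c * H * h" if "i < n" for i
    proof -
      have "norm (coeff TC i) \<le> c * (H * h ^ (n - i))"
        using bound that unfolding TC_def H_def by simp
      also have "h ^ (n - i) \<le> h ^ 1" using h that by (intro power_decreasing) auto
      then have "c * (H * h ^ (n - i)) \<le> c * H * h"
        using \<open>0 \<le> c\<close> H1 by (simp add: mult_left_mono mult.assoc)
      finally show ?thesis .
    qed
    then show ?thesis using sum_mono[of "{..<n}" "\<lambda>i. norm (coeff TC i)" "\<lambda>_. c * H * h"] by simp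
  qed
  have top: "norm (coeff TC (n + 1)) \<le> 1"
    unfolding TC_def using adm by (rule taylor_top_coeff_admissible)
  have "(\<Sum>i\<le>degree P. norm (coeff TC i)) \<le> (\<Sum>i\<le>n + 1. norm (coeff TC i))"
    using deg by (intro sum_mono2) auto
  also have "\<dots> = (\<Sum>i<n. norm (coeff TC i)) + b + norm (coeff TC (n + 1))"
    by (simp add: b_def lessThan_Suc_atMost[symmetric])
  finally have sum_bound: "(\<Sum>i\<le>degree P. norm (coeff TC i)) \<le> real n * (c * H * h) + b + 1"
    using lower top by linarith
  have "(1 + norm x) ^ degree P \<le> K"
    unfolding K_def using deg by (intro power_increasing) auto
  moreover have "H \<le> (\<Sum>i\<le>degree P. norm (coeff TC i)) * (1 + norm x) ^ degree P"
    unfolding H_def TC_def by (rule height_le_taylor_coeffs)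
  ultimately have "H \<le> (real n * (c * H * h) + b + 1) * K"
    using sum_bound h \<open>0 \<le> c\<close> H1
    by (elim order_trans) (intro mult_mono, auto simp: b_def intro: sum_nonneg)
  also have "\<dots> = (4 * K * real n * c * h) * (H / 4) + b * K + K"
    by (simp add: algebra_simps)
  also have "(4 * K * real n * c * h) * (H / 4) \<le> 1 * (H / 4)"
    using small H1 by (intro mult_right_mono) auto
  finally have "H \<le> H / 4 + b * K + K" by simp
  then show ?thesis using large unfolding H_def b_def TC_def by (simp add: mult.commute)
qed

lemma far_root_exists:
  fixes R :: "complex multiset"
  assumes "size R = Suc n" "0 < b" "b \<le> norm (coeff (\<Prod>\<alpha>\<in>#R. [:x - \<alpha>, 1:]) n)"
  shows "\<exists>\<alpha>\<in>#R. b / 2 ^ (n + 2) < norm (x - \<alpha>)"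
proof (rule ccontr)
  assume "\<not> ?thesis"
  then have "\<forall>\<alpha>\<in>#R. norm (x - \<alpha>) \<le> b / 2 ^ (n + 2)" by (auto simp: not_less)
  from prod_linear_factors_coeff_bound[OF this, of n]
  have "norm (coeff (\<Prod>\<alpha>\<in>#R. [:x - \<alpha>, 1:]) n) \<le> b / 2"
    using assms(1,2) by (simp add: power_add)
  then show False using assms(2,3) by simp
qed

lemma deflation_coeff_bound:
  fixes u :: complex and q :: "complex poly"
  assumes "1 \<le> M" "1 \<le> H" "0 < h" "h \<le> 1" "0 \<le> c" "H / M \<le> norm u"
    and bound: "\<forall>k\<le>n. norm (coeff ([:u, 1:] * q) k) \<le> c * (H * h ^ (n - k))"
    and "k \<le> n"
  shows "norm (coeff q k) \<le> (M * (c + 1)) ^ (k + 1) * h ^ (n - k)"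
  using \<open>k \<le> n\<close>
proof (induction k)
  case 0
  have "norm (coeff q 0) * (H / M) \<le> norm (coeff q 0) * norm u"
    using assms(6) by (intro mult_left_mono) auto
  also have "\<dots> = norm (coeff ([:u, 1:] * q) 0)" by (simp add: norm_mult)
  also have "\<dots> \<le> c * (H * h ^ n)" using bound[rule_format, of 0] by simp
  finally have "norm (coeff q 0) \<le> M * c * h ^ n"
    using assms(1,2) by (simp add: field_simps)
  also have "\<dots> \<le> M * (c + 1) * h ^ n"
    using assms by (intro mult_right_mono mult_left_mono) auto
  finally show ?case by simp
next
  case (Suc j)
  define D where "D = M * (c + 1)"
  have D1: "1 \<le> D" unfolding D_def using assms(1,5) mult_mono[of 1 M 1 "c + 1"] by simp
  have "norm (coeff q j) \<le> D ^ (j + 1) * h ^ (n - j)" using Suc by (simp add: D_def)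
  also have "\<dots> \<le> D ^ (j + 1) * (H * h ^ (n - Suc j))"
  proof -
    have "h ^ (n - j) \<le> h ^ (n - Suc j)" using assms(3,4) by (intro power_decreasing) auto
    also have "\<dots> \<le> H * h ^ (n - Suc j)" using assms(2,3) by (simp add: mult_le_cancel_right1)
    finally show ?thesis using D1 by (intro mult_left_mono) auto
  qed
  finally have prev: "norm (coeff q j) \<le> D ^ (j + 1) * (H * h ^ (n - Suc j))" .
  have "norm (coeff q (Suc j)) * (H / M) \<le> norm (coeff q (Suc j)) * norm u"
    using assms(6) by (intro mult_left_mono) auto
  also have "\<dots> = norm (u * coeff q (Suc j))" by (simp add: norm_mult)
  also have "u * coeff q (Suc j) = coeff ([:u, 1:] * q) (Suc j) - coeff q j"
    by (simp add: coeff_linear_factor_mult)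
  also have "norm \<dots> \<le> c * (H * h ^ (n - Suc j)) + D ^ (j + 1) * (H * h ^ (n - Suc j))"
    using bound Suc.prems prev by (intro order_trans[OF norm_triangle_ineq4] add_mono) auto
  finally have "norm (coeff q (Suc j)) * H \<le> M * (c + D ^ (j + 1)) * h ^ (n - Suc j) * H"
    using assms(1) by (simp add: field_simps)
  then have "norm (coeff q (Suc j)) \<le> M * (c + D ^ (j + 1)) * h ^ (n - Suc j)"
    using assms(2) by simp
  also have "M * (c + D ^ (j + 1)) \<le> D ^ (Suc j + 1)"
  proof -
    have "1 \<le> D ^ (j + 1)" using D1 by (rule one_le_power)
    then have "c \<le> c * D ^ (j + 1)" using assms(5) by (simp add: mult_le_cancel_left1)
    then have "M * (c + D ^ (j + 1)) \<le> M * ((c + 1) * D ^ (j + 1))"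
      using assms(1) by (intro mult_left_mono) (auto simp: algebra_simps)
    then show ?thesis by (simp add: D_def algebra_simps)
  qed
  then have "M * (c + D ^ (j + 1)) * h ^ (n - Suc j) \<le> D ^ (Suc j + 1) * h ^ (n - Suc j)"
    using assms(3) by (intro mult_right_mono) auto
  finally show ?case by (simp add: D_def)
qed

lemma prod_linear_factors_monic:
  fixes R :: "complex multiset"
  shows "degree (\<Prod>\<alpha>\<in>#R. [:x - \<alpha>, 1:]) = size R" "lead_coeff (\<Prod>\<alpha>\<in>#R. [:x - \<alpha>, 1:]) = 1"
proof -
  have "degree (\<Prod>\<alpha>\<in>#R. [:x - \<alpha>, 1:]) = size R \<and> lead_coeff (\<Prod>\<alpha>\<in>#R. [:x - \<alpha>, 1:]) = 1"
  proof (induction R)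
    case (add a R)
    define p where "p = (\<Prod>\<alpha>\<in>#R. [:x - \<alpha>, 1:])"
    from add.IH have IH: "degree p = size R" "lead_coeff p = 1" unfolding p_def by blast+
    then have "p \<noteq> 0" by auto
    then have "degree ([:x - a, 1:] * p) = Suc (size R)"
      using IH by (simp add: degree_mult_eq del: mult_pCons_left)
    moreover have "lead_coeff ([:x - a, 1:] * p) = 1"
      by (simp only: lead_coeff_mult IH(2)) simp
    ultimately show ?case by (simp add: p_def del: mult_pCons_left)
  qed simp
  then show "degree (\<Prod>\<alpha>\<in>#R. [:x - \<alpha>, 1:]) = size R" "lead_coeff (\<Prod>\<alpha>\<in>#R. [:x - \<alpha>, 1:]) = 1"
    by blast+
qed

text \<open>Degree n: Cauchy's bound applied to P(x+T), whose leading coefficient is the large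
  n-th coefficient, puts every root of P within O(h) of x.\<close>
lemma close_roots_degree_n:
  fixes P :: "int poly" and x :: complex
  assumes deg: "degree P = n" and "1 \<le> n" and h: "0 < h" "h \<le> 1" and "0 \<le> c" "0 < K"
    and bound: "\<forall>k\<le>n. norm (coeff (taylor_shift x (cpoly P)) k) \<le> c * (height P * h ^ (n - k))"
    and middle: "height P \<le> K * norm (coeff (taylor_shift x (cpoly P)) n)"
  shows "\<forall>\<alpha>\<in>#proots (cpoly P). norm (x - \<alpha>) \<le> max 1 (real n * c * K) * h"
proof
  fix \<alpha> assume root: "\<alpha> \<in># proots (cpoly P)"
  define TC where "TC = taylor_shift x (cpoly P)"
  define H where "H = height P"
  have H1: "1 \<le> H" unfolding H_def using deg \<open>1 \<le> n\<close> by (intro height_ge_1) auto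
  have deg_TC: "degree TC = n" by (simp add: TC_def degree_pcompose degree_map_poly deg)
  have "poly TC (\<alpha> - x) = 0"
    using root by (cases "cpoly P = 0") (auto simp: TC_def poly_pcompose)
  then have "norm (\<alpha> - x) \<le> max h (real (degree TC) * (c * H) * h / (H / K))"
  proof (rule cauchy_root_bound)
    show "H / K \<le> norm (lead_coeff TC)"
      using middle \<open>0 < K\<close> deg_TC by (simp add: TC_def H_def field_simps)
    show "\<forall>k<degree TC. norm (coeff TC k) \<le> c * H * h ^ (degree TC - k)"
      using bound deg_TC by (simp add: TC_def H_def mult.assoc)
  qed (use h H1 \<open>0 \<le> c\<close> \<open>0 < K\<close> in auto)
  also have "real (degree TC) * (c * H) * h / (H / K) = (real n * c * K) * h"
    using H1 \<open>0 < K\<close> by (simp add: deg_TC field_simps)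
  also have "max h (real n * c * K * h) = max 1 (real n * c * K) * h"
    using h by (simp add: max_mult_distrib_right)
  finally show "norm (x - \<alpha>) \<le> max 1 (real n * c * K) * h" by (simp add: norm_minus_commute)
qed

lemma monic_root_bound:
  fixes q :: "complex poly"
  assumes "degree q = n" "lead_coeff q = 1" "poly q z = 0" "0 < h" "h \<le> 1" "1 \<le> D"
    and bound: "\<forall>k\<le>n. norm (coeff q k) \<le> D ^ (k + 1) * h ^ (n - k)"
  shows "norm z \<le> max 1 (real n * D ^ (n + 1)) * h"
proof -
  have "norm z \<le> max h (real (degree q) * D ^ (n + 1) * h / 1)"
  proof (rule cauchy_root_bound[OF assms(3)])
    have "norm (coeff q k) \<le> D ^ (n + 1) * h ^ (n - k)" if "k < n" for k
    proof -
      have "norm (coeff q k) \<le> D ^ (k + 1) * h ^ (n - k)" using bound that by simp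
      also have "\<dots> \<le> D ^ (n + 1) * h ^ (n - k)"
        using assms(4-6) that by (intro mult_right_mono power_increasing) auto
      finally show ?thesis .
    qed
    then show "\<forall>k<degree q. norm (coeff q k) \<le> D ^ (n + 1) * h ^ (degree q - k)"
      using assms(1) by simp
  qed (use assms in auto)
  also have "\<dots> = max 1 (real n * D ^ (n + 1)) * h"
    using assms by (simp add: max_mult_distrib_right)
  finally show ?thesis .
qed

text \<open>Degree n + 1, monic: some root alpha is far from x; dividing P(x+T) by T + x - alpha
  leaves a monic polynomial of degree n with coefficients O(h^(n-k)), whose roots (the
  remaining n roots of P, shifted by x) are O(h) by Cauchy's bound.\<close>
lemma close_roots_monic:
  fixes P :: "int poly" and x :: complex and c K :: real and n :: nat
  defines "D \<equiv> 2 ^ (n + 3) * K * (c + 1)"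
  assumes deg: "degree P = n + 1" and monic: "lead_coeff P = 1"
    and h: "0 < h" "h \<le> 1" and "0 \<le> c" "1 \<le> K"
    and bound: "\<forall>k\<le>n. norm (coeff (taylor_shift x (cpoly P)) k) \<le> c * (height P * h ^ (n - k))"
    and middle: "height P \<le> 2 * K * norm (coeff (taylor_shift x (cpoly P)) n)"
  shows "\<exists>A. size A = n \<and> A \<subseteq># proots (cpoly P)
               \<and> (\<forall>\<alpha>\<in>#A. norm (x - \<alpha>) \<le> max 1 (real n * D ^ (n + 1)) * h)"
proof -
  define TC where "TC = taylor_shift x (cpoly P)"
  define H where "H = height P"
  define R where "R = proots (cpoly P)"
  define b where "b = norm (coeff TC n)"
  have H1: "1 \<le> H" unfolding H_def using deg by (intro height_ge_1) auto
  have TC_prod: "TC = (\<Prod>\<alpha>\<in>#R. [:x - \<alpha>, 1:])"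
    using monic by (simp add: TC_def R_def taylor_shift_factorization degree_map_poly coeff_map_poly)
  have size_R: "size R = Suc n" by (simp add: R_def size_proots_complex degree_map_poly deg)
  have b_large: "H / (2 * K) \<le> b" using middle \<open>1 \<le> K\<close> by (simp add: b_def TC_def H_def field_simps)
  moreover have "0 < H / (2 * K)" using H1 \<open>1 \<le> K\<close> by simp
  ultimately have "\<exists>\<alpha>\<in>#R. b / 2 ^ (n + 2) < norm (x - \<alpha>)"
    by (intro far_root_exists[OF size_R]) (auto simp: b_def TC_prod)
  then obtain \<alpha> where "\<alpha> \<in># R" and far: "b / 2 ^ (n + 2) < norm (x - \<alpha>)" by blast
  then obtain R' where R: "R = add_mset \<alpha> R'" by (blast dest: multi_member_split)
  define q where "q = (\<Prod>\<beta>\<in>#R'. [:x - \<beta>, 1:])"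
  have "degree q = n" using size_R unfolding q_def prod_linear_factors_monic(1) R by simp
  moreover have "lead_coeff q = 1" unfolding q_def by (rule prod_linear_factors_monic(2))
  ultimately have q_monic: "degree q = n" "lead_coeff q = 1" by blast+
  have "H / (2 ^ (n + 3) * K) = (H / (2 * K)) / 2 ^ (n + 2)" by (simp add: power_add)
  also have "\<dots> \<le> b / 2 ^ (n + 2)" using b_large by (intro divide_right_mono) auto
  finally have "H / (2 ^ (n + 3) * K) \<le> norm (x - \<alpha>)" using far by linarith
  moreover have M1: "1 \<le> 2 ^ (n + 3) * K" using \<open>1 \<le> K\<close> mult_mono[of 1 "2 ^ (n + 3)" 1 K] by simp
  ultimately have q_bound: "norm (coeff q k) \<le> D ^ (k + 1) * h ^ (n - k)" if "k \<le> n" for k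
    unfolding D_def using bound H1 h \<open>0 \<le> c\<close> that
    by (intro deflation_coeff_bound[where u = "x - \<alpha>" and H = H])
       (auto simp: TC_def[symmetric] H_def TC_prod R q_def)
  have D1: "1 \<le> D" unfolding D_def using M1 \<open>0 \<le> c\<close> mult_mono[of 1 "2 ^ (n + 3) * K" 1 "c + 1"] by simp
  have "norm (x - \<beta>) \<le> max 1 (real n * D ^ (n + 1)) * h" if "\<beta> \<in># R'" for \<beta>
  proof -
    have "poly q (\<beta> - x) = 0"
      using that by (force simp: q_def poly_prod_mset prod_mset_zero_iff)
    then have "norm (\<beta> - x) \<le> max 1 (real n * D ^ (n + 1)) * h"
      using q_monic h D1 q_bound by (intro monic_root_bound) auto
    then show ?thesis by (simp add: norm_minus_commute)
  qed
  moreover have "R' \<subseteq># proots (cpoly P)" "size R' = n"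
    using R size_R by (simp_all add: R_def[symmetric])
  ultimately show ?thesis by blast
qed

text \<open>Direction (i) => (ii) for a single polynomial of large height, with h abstract.\<close>
lemma close_roots_large_height:
  fixes P :: "int poly" and x :: complex and n :: nat
  defines "K \<equiv> (1 + norm x) ^ (n + 1)"
  assumes adm: "admissible n P" and "1 \<le> n" and h: "0 < h" "h \<le> 1" and "0 \<le> c"
    and bound: "\<forall>k\<le>n. norm (coeff (taylor_shift x (cpoly P)) k) \<le> c * (height P * h ^ (n - k))"
    and large: "4 * K \<le> height P" and small: "4 * K * real n * c * h \<le> 1"
  shows "\<exists>A. size A = n \<and> A \<subseteq># proots (cpoly P) \<and> (\<forall>\<alpha>\<in>#A. norm (x - \<alpha>)
           \<le> max 1 (max (real n * c * (2 * K)) (real n * (2 ^ (n + 3) * K * (c + 1)) ^ (n + 1))) * h)"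
    (is "\<exists>A. _ \<and> _ \<and> (\<forall>\<alpha>\<in>#A. norm (x - \<alpha>) \<le> ?C * h)")
proof -
  have K1: "1 \<le> K" unfolding K_def by (intro one_le_power) simp
  have middle: "height P \<le> 2 * K * norm (coeff (taylor_shift x (cpoly P)) n)"
    using taylor_middle_coeff_large[OF adm h \<open>0 \<le> c\<close> bound] large small unfolding K_def by blast
  have enlarge: "max 1 a * h \<le> ?C * h" if "a \<in> {real n * c * (2 * K), real n * (2 ^ (n + 3) * K * (c + 1)) ^ (n + 1)}" for a
    using that h by (intro mult_right_mono) auto
  show ?thesis
  proof (cases "degree P = n")
    case True
    have close: "\<forall>\<alpha>\<in>#proots (cpoly P). norm (x - \<alpha>) \<le> max 1 (real n * c * (2 * K)) * h"
      using True \<open>1 \<le> n\<close> h \<open>0 \<le> c\<close> K1 bound middle by (intro close_roots_degree_n) auto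
    show ?thesis
    proof (intro exI[of _ "proots (cpoly P)"] conjI ballI)
      show "size (proots (cpoly P)) = n"
        using True by (simp add: size_proots_complex degree_map_poly)
      show "norm (x - \<alpha>) \<le> ?C * h" if "\<alpha> \<in># proots (cpoly P)" for \<alpha>
        using close that enlarge[of "real n * c * (2 * K)"] by force
    qed simp
  next
    case False
    then have "degree P = n + 1" "lead_coeff P = 1" using adm by (auto simp: admissible_def)
    from close_roots_monic[OF this h \<open>0 \<le> c\<close> K1 bound middle]
    obtain A where A: "size A = n" "A \<subseteq># proots (cpoly P)"
      and close: "\<forall>\<alpha>\<in>#A. norm (x - \<alpha>) \<le> max 1 (real n * (2 ^ (n + 3) * K * (c + 1)) ^ (n + 1)) * h"
      by blast
    have "norm (x - \<alpha>) \<le> ?C * h" if "\<alpha> \<in># A" for \<alpha>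
      using close that enlarge[of "real n * (2 ^ (n + 3) * K * (c + 1)) ^ (n + 1)"] by force
    then show ?thesis using A by blast
  qed
qed

lemma height_powr_facts:
  fixes H \<delta> :: real
  assumes "1 \<le> H" "0 < \<delta>"
  shows "0 < H powr (- \<delta>)" "H powr (- \<delta>) \<le> 1"
    and "H powr (1 - real m * \<delta>) = H * (H powr (- \<delta>)) ^ m"
proof -
  show "0 < H powr (- \<delta>)" using assms by simp
  have "1 \<le> H powr \<delta>" using assms by (intro ge_one_powr_ge_zero) auto
  then show "H powr (- \<delta>) \<le> 1" by (simp add: powr_minus_divide divide_le_eq)
  have "H powr (1 - real m * \<delta>) = H powr 1 * H powr (real m * (- \<delta>))"
    using powr_add[of H 1 "real m * (- \<delta>)"] by simp
  also have "\<dots> = H * (H powr (- \<delta>)) ^ m" using assms by (simp add: powr_power)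
  finally show "H powr (1 - real m * \<delta>) = H * (H powr (- \<delta>)) ^ m" .
qed

lemma div_deriv_bound_iff_taylor_bound:
  assumes "1 \<le> height P" "0 < \<delta>"
  shows "\<bar>div_deriv (map_poly real_of_int P) k \<xi>\<bar> \<le> c * height P powr (1 - real m * \<delta>)
     \<longleftrightarrow> norm (coeff (taylor_shift (complex_of_real \<xi>) (cpoly P)) k)
           \<le> c * (height P * (height P powr (- \<delta>)) ^ m)"
proof -
  have "\<bar>div_deriv (map_poly real_of_int P) k \<xi>\<bar>
          = norm (coeff (taylor_shift (complex_of_real \<xi>) (cpoly P)) k)"
    by (metis div_deriv_eq_taylor_coeff norm_of_real)
  then show ?thesis using height_powr_facts(3)[OF assms] by simp
qed

lemma below_threshold:
  fixes a H \<delta> :: real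
  assumes "0 < \<delta>" "0 \<le> a" "a powr (1 / \<delta>) \<le> H"
  shows "a * H powr (- \<delta>) \<le> 1"
proof (cases "a = 0")
  case False
  then have "a = (a powr (1 / \<delta>)) powr \<delta>" using assms by (simp add: powr_powr)
  also have "\<dots> \<le> H powr \<delta>" using assms by (intro powr_mono2) auto
  finally show ?thesis using \<open>a \<noteq> 0\<close> assms by (simp add: powr_minus_divide divide_simps)
qed simp

lemma sub_multiset_of_size:
  assumes "n \<le> size R"
  obtains A where "A \<subseteq># R" "size A = n"
proof -
  obtain xs where R: "R = mset xs" using ex_mset[of R] by metis
  have "mset (take n xs) \<subseteq># mset (take n xs) + mset (drop n xs)" by simp
  also have "\<dots> = R" by (simp add: R flip: mset_append)
  finally show ?thesis using assms R by (intro that[of "mset (take n xs)"]) auto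
qed

text \<open>Polynomials of bounded height: all roots lie within O(1) of x, which is O(h).\<close>
lemma roots_close_bounded_height:
  assumes adm: "admissible n P" and "1 \<le> n" "0 < \<delta>" "height P \<le> H0"
    and root: "\<alpha> \<in># proots (cpoly P)"
  shows "norm (x - \<alpha>) \<le> (norm x + (real n + 1) * H0) * H0 powr \<delta> * height P powr (- \<delta>)"
proof -
  have H1: "1 \<le> height P" using adm \<open>1 \<le> n\<close> by (intro height_ge_1) (auto simp: admissible_def)
  have "poly (cpoly P) \<alpha> = 0" using root by (cases "cpoly P = 0") auto
  then have "norm \<alpha> \<le> real (degree P) * height P"
    using adm \<open>1 \<le> n\<close> by (intro integer_root_bound) (auto simp: admissible_def)
  also have "\<dots> \<le> (real n + 1) * H0"
    using adm \<open>height P \<le> H0\<close> H1 by (intro mult_mono) (auto simp: admissible_def)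
  finally have "norm (x - \<alpha>) \<le> (norm x + (real n + 1) * H0) * 1"
    using norm_triangle_ineq4[of x \<alpha>] by simp
  also have "1 \<le> H0 powr \<delta> * height P powr (- \<delta>)"
  proof -
    have "height P powr \<delta> \<le> H0 powr \<delta>" using assms H1 by (intro powr_mono2) auto
    then show ?thesis using H1 by (simp add: powr_minus_divide divide_simps)
  qed
  then have "(norm x + (real n + 1) * H0) * 1 \<le> (norm x + (real n + 1) * H0) * (H0 powr \<delta> * height P powr (- \<delta>))"
    using H1 \<open>height P \<le> H0\<close> by (intro mult_left_mono) auto
  finally show ?thesis by (simp add: mult.assoc)
qed

lemma roots_close_imp_derivs_small:
  fixes \<xi> \<delta> c7 :: real and n :: nat
  assumes "1 \<le> n" "0 < \<delta>" "0 < c7"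
  shows "\<exists>c6>0. \<forall>P. admissible n P \<longrightarrow>
           (\<exists>A. size A = n \<and> A \<subseteq># proots (cpoly P) \<and>
              (\<forall>\<alpha>\<in>#A. cmod (complex_of_real \<xi> - \<alpha>) \<le> c7 * height P powr (- \<delta>))) \<longrightarrow>
           (\<forall>k\<le>n. \<bar>div_deriv (map_poly real_of_int P) k \<xi>\<bar> \<le> c6 * height P powr (1 - real (n - k) * \<delta>))"
proof -
  define c6 where "c6 = (\<bar>\<xi>\<bar> + real n + 2) * (2 ^ n * (max 1 c7) ^ (n + 1))"
  have "\<bar>div_deriv (map_poly real_of_int P) k \<xi>\<bar> \<le> c6 * height P powr (1 - real (n - k) * \<delta>)"
    if adm: "admissible n P" and A: "size A = n" "A \<subseteq># proots (cpoly P)"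
      "\<forall>\<alpha>\<in>#A. cmod (complex_of_real \<xi> - \<alpha>) \<le> c7 * height P powr (- \<delta>)" and "k \<le> n" for P A k
  proof -
    have H1: "1 \<le> height P" using adm \<open>1 \<le> n\<close> by (intro height_ge_1) (auto simp: admissible_def)
    note h = height_powr_facts[OF H1 \<open>0 < \<delta>\<close>]
    have "norm (coeff (taylor_shift (complex_of_real \<xi>) (cpoly P)) k)
            \<le> c6 * (height P * (height P powr (- \<delta>)) ^ (n - k))"
      using close_roots_imp_taylor_bound[OF adm \<open>1 \<le> n\<close> h(1,2) \<open>0 < c7\<close> A \<open>k \<le> n\<close>]
      by (simp add: c6_def)
    then show ?thesis using div_deriv_bound_iff_taylor_bound[OF H1 \<open>0 < \<delta>\<close>] by blast
  qed
  moreover have "0 < c6" by (simp add: c6_def)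
  ultimately show ?thesis by blast
qed

lemma roots_close_large_height_powr:
  fixes \<xi> \<delta> c6 :: real and n :: nat
  defines "K \<equiv> (1 + \<bar>\<xi>\<bar>) ^ (n + 1)"
  assumes adm: "admissible n P" and "1 \<le> n" "0 < \<delta>" "0 < c6"
    and bound: "\<forall>k\<le>n. \<bar>div_deriv (map_poly real_of_int P) k \<xi>\<bar> \<le> c6 * height P powr (1 - real (n - k) * \<delta>)"
    and above: "max (4 * K) ((4 * K * real n * c6) powr (1 / \<delta>)) \<le> height P"
  shows "\<exists>A. size A = n \<and> A \<subseteq># proots (cpoly P) \<and> (\<forall>\<alpha>\<in>#A. cmod (complex_of_real \<xi> - \<alpha>)
           \<le> max 1 (max (real n * c6 * (2 * K)) (real n * (2 ^ (n + 3) * K * (c6 + 1)) ^ (n + 1)))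
               * height P powr (- \<delta>))"
proof -
  have H1: "1 \<le> height P" using adm \<open>1 \<le> n\<close> by (intro height_ge_1) (auto simp: admissible_def)
  note h = height_powr_facts[OF H1 \<open>0 < \<delta>\<close>]
  have taylor_bound: "\<forall>k\<le>n. norm (coeff (taylor_shift (complex_of_real \<xi>) (cpoly P)) k)
                              \<le> c6 * (height P * (height P powr (- \<delta>)) ^ (n - k))"
    using bound div_deriv_bound_iff_taylor_bound[OF H1 \<open>0 < \<delta>\<close>, where m = "n - _"] by blast
  have small: "4 * K * real n * c6 * height P powr (- \<delta>) \<le> 1"
    using above \<open>0 < \<delta>\<close> \<open>0 < c6\<close> by (intro below_threshold) (auto simp: K_def)
  show ?thesis
    using close_roots_large_height[OF adm \<open>1 \<le> n\<close> h(1,2) _ taylor_bound] above small \<open>0 < c6\<close>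
    unfolding K_def by auto
qed

text \<open>(i) => (ii) with a constant c7 independent of P: polynomials of height at most H0 are
  handled by the trivial root bound, those of larger height by the Taylor-coefficient argument.\<close>
lemma derivs_small_imp_roots_close:
  fixes \<xi> \<delta> c6 :: real and n :: nat
  assumes "1 \<le> n" "0 < \<delta>" "0 < c6"
  shows "\<exists>c7>0. \<forall>P. admissible n P \<longrightarrow>
           (\<forall>k\<le>n. \<bar>div_deriv (map_poly real_of_int P) k \<xi>\<bar> \<le> c6 * height P powr (1 - real (n - k) * \<delta>)) \<longrightarrow>
           (\<exists>A. size A = n \<and> A \<subseteq># proots (cpoly P) \<and>
              (\<forall>\<alpha>\<in>#A. cmod (complex_of_real \<xi> - \<alpha>) \<le> c7 * height P powr (- \<delta>)))"
proof -
  define K where "K = (1 + \<bar>\<xi>\<bar>) ^ (n + 1)"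
  define H0 where "H0 = max (4 * K) ((4 * K * real n * c6) powr (1 / \<delta>))"
  define C_small where "C_small = (\<bar>\<xi>\<bar> + (real n + 1) * H0) * H0 powr \<delta>"
  define C_large where
    "C_large = max 1 (max (real n * c6 * (2 * K)) (real n * (2 ^ (n + 3) * K * (c6 + 1)) ^ (n + 1)))"
  define c7 where "c7 = max C_small C_large"
  have "\<exists>A. size A = n \<and> A \<subseteq># proots (cpoly P) \<and>
          (\<forall>\<alpha>\<in>#A. cmod (complex_of_real \<xi> - \<alpha>) \<le> c7 * height P powr (- \<delta>))"
    if adm: "admissible n P" and bound: "\<forall>k\<le>n. \<bar>div_deriv (map_poly real_of_int P) k \<xi>\<bar>
                                             \<le> c6 * height P powr (1 - real (n - k) * \<delta>)" for P
  proof -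
    have "\<exists>C\<in>{C_small, C_large}. \<exists>A. size A = n \<and> A \<subseteq># proots (cpoly P) \<and>
            (\<forall>\<alpha>\<in>#A. cmod (complex_of_real \<xi> - \<alpha>) \<le> C * height P powr (- \<delta>))"
    proof (cases "height P \<le> H0")
      case True
      have "n \<le> size (proots (cpoly P))"
        using adm by (auto simp: admissible_def size_proots_complex degree_map_poly)
      then obtain A where A: "A \<subseteq># proots (cpoly P)" "size A = n" by (rule sub_multiset_of_size)
      then have "\<forall>\<alpha>\<in>#A. cmod (complex_of_real \<xi> - \<alpha>) \<le> C_small * height P powr (- \<delta>)"
        using roots_close_bounded_height[OF adm \<open>1 \<le> n\<close> \<open>0 < \<delta>\<close> True, where x = "complex_of_real \<xi>"]
        by (auto simp: C_small_def dest: mset_subset_eqD)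
      then show ?thesis using A by blast
    next
      case False
      then have "H0 \<le> height P" by simp
      from roots_close_large_height_powr[OF adm assms bound this[unfolded H0_def K_def]]
      show ?thesis unfolding C_large_def K_def by blast
    qed
    moreover have "C * height P powr (- \<delta>) \<le> c7 * height P powr (- \<delta>)" if "C \<in> {C_small, C_large}" for C
      using that by (intro mult_right_mono) (auto simp: c7_def)
    ultimately show ?thesis by (blast intro: order_trans)
  qed
  moreover have "0 < c7" by (simp add: c7_def C_large_def)
  ultimately show ?thesis by blast
qed

theorem proposition3:
  fixes \<xi> :: real and n :: nat and \<delta> :: real and \<P> :: "int poly set"
  assumes "n \<ge> 1" and "\<delta> > 0"
    and "\<forall>P\<in>\<P>. degree P = n \<or> (degree P = n + 1 \<and> lead_coeff P = 1)"
  shows "(\<exists>c6>0. \<forall>P\<in>\<P>. \<forall>k\<le>n.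
            \<bar>div_deriv (map_poly real_of_int P) k \<xi>\<bar> \<le> c6 * height P powr (1 - real (n - k) * \<delta>))
     \<longleftrightarrow>
     (\<exists>c7>0. \<forall>P\<in>\<P>. \<exists>A :: complex multiset.
            size A = n \<and> A \<subseteq># proots (map_poly (of_int :: int \<Rightarrow> complex) P) \<and>
            (\<forall>\<alpha>\<in>#A. cmod (complex_of_real \<xi> - \<alpha>) \<le> c7 * height P powr (- \<delta>)))"
proof -
  have adm: "\<forall>P\<in>\<P>. admissible n P" using assms(3) by (simp add: admissible_def)
  show ?thesis
  proof
    assume "\<exists>c6>0. \<forall>P\<in>\<P>. \<forall>k\<le>n.
      \<bar>div_deriv (map_poly real_of_int P) k \<xi>\<bar> \<le> c6 * height P powr (1 - real (n - k) * \<delta>)"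
    then obtain c6 where "0 < c6" and derivs: "\<forall>P\<in>\<P>. \<forall>k\<le>n.
      \<bar>div_deriv (map_poly real_of_int P) k \<xi>\<bar> \<le> c6 * height P powr (1 - real (n - k) * \<delta>)"
      by blast
    from derivs_small_imp_roots_close[OF assms(1,2) \<open>0 < c6\<close>, of \<xi>] adm derivs
    show "\<exists>c7>0. \<forall>P\<in>\<P>. \<exists>A. size A = n \<and> A \<subseteq># proots (cpoly P) \<and>
      (\<forall>\<alpha>\<in>#A. cmod (complex_of_real \<xi> - \<alpha>) \<le> c7 * height P powr (- \<delta>))"
      by blast
  next
    assume "\<exists>c7>0. \<forall>P\<in>\<P>. \<exists>A. size A = n \<and> A \<subseteq># proots (cpoly P) \<and>
      (\<forall>\<alpha>\<in>#A. cmod (complex_of_real \<xi> - \<alpha>) \<le> c7 * height P powr (- \<delta>))"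
    then obtain c7 where "0 < c7" and roots: "\<forall>P\<in>\<P>. \<exists>A. size A = n \<and> A \<subseteq># proots (cpoly P) \<and>
      (\<forall>\<alpha>\<in>#A. cmod (complex_of_real \<xi> - \<alpha>) \<le> c7 * height P powr (- \<delta>))"
      by blast
    from roots_close_imp_derivs_small[OF assms(1,2) \<open>0 < c7\<close>, of \<xi>] adm roots
    show "\<exists>c6>0. \<forall>P\<in>\<P>. \<forall>k\<le>n.
      \<bar>div_deriv (map_poly real_of_int P) k \<xi>\<bar> \<le> c6 * height P powr (1 - real (n - k) * \<delta>)"
      by blast
  qed
qed

end
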